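(* Let $q$ be a prime power, let $r,m>1$ be integers, $n=rm$, and let $k$ be an integer with $1<k\le m$. Let $s_1,s_2\ge1$, let $V_{1,1},\dots,V_{1,s_1}\in\mathcal{G}_q(m,k)$ and $\mathcal{C}_1=\bigcup_{h_1=1}^{s_1}\mathrm{Orb}_{\mathbb{F}_{q^m}^*}(V_{1,h_1})$. For $h_2=1,\dots,s_2$ let $\Phi_{2,h_2}:\mathbb{F}_{q^m}\to\mathbb{F}_{q^n}$ be an injective $\mathbb{F}_q$-linear map, $V_{2,h_2}=\Phi_{2,h_2}(\mathbb{F}_{q^m})$, and $\mathcal{C}_2=\bigcup_{h_2=1}^{s_2}\mathrm{Orb}_{\mathbb{F}_{q^n}^*}(V_{2,h_2})\subseteq\mathcal{G}_q(n,m)$. Define $$\mathcal{C}_2\odot\mathcal{C}_1=\bigcup_{h_2=1}^{s_2}\bigcup_{h_1=1}^{s_1}\bigcup_{\alpha\in\mathbb{F}_{q^m}^*}\mathrm{Orb}_{\mathbb{F}_{q^n}^*}\big(\Phi_{2,h_2}(\alpha V_{1,h_1})\big)\subseteq\mathcal{G}_q(n,k).$$ If $\mathcal{C}_2$ is full-length and $d(\mathcal{C}_2)>2(m-k)$, then $\mathcal{C}_2\odot\mathcal{C}_1$ is a full-length multi-orbit cyclic subspace code.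
   Context: For positive integers $k\le N$, $\mathcal{G}_q(N,k)$ denotes the set of $k$-dimensional $\mathbb{F}_q$-subspaces of $\mathbb{F}_{q^N}$. The subspace distance is $d(U,V)=\dim_{\mathbb{F}_q}(U+V)-\dim_{\mathbb{F}_q}(U\cap V)$, and $d(\mathcal{C})=\min\{d(U,V):U,V\in\mathcal{C},U\ne V\}$. For $V\in\mathcal{G}_q(N,k)$, $\mathrm{Orb}_{\mathbb{F}_{q^N}^*}(V)=\{\beta V:\beta\in\mathbb{F}_{q^N}^*\}$; a (multi-orbit) cyclic subspace code is a finite union of such orbits. A one-orbit code $\mathrm{Orb}_{\mathbb{F}_{q^N}^*}(V)$ is full-length if $\{\beta\in\mathbb{F}_{q^N}^*:\beta V=V\}=\mathbb{F}_q^*$; a union $\bigcup_i\mathrm{Orb}(V_i)$ is full-length if each $\mathrm{Orb}(V_i)$ is full-length. *)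

theory Defs
  imports "HOL-Computational_Algebra.Primes"
begin

text \<open>All fields live inside one finite field 'a playing the role of F_{q^n};
  K plays F_q and M plays F_{q^m} (unique subfields of those orders).\<close>

definition is_subfield :: "'a::field set \<Rightarrow> bool" where
  "is_subfield K \<longleftrightarrow> 0 \<in> K \<and> 1 \<in> K \<and>
     (\<forall>x\<in>K. \<forall>y\<in>K. x + y \<in> K \<and> x * y \<in> K) \<and>
     (\<forall>x\<in>K. - x \<in> K \<and> inverse x \<in> K)"

definition ksubspace :: "'a::field set \<Rightarrow> 'a set \<Rightarrow> bool" where
  "ksubspace K W \<longleftrightarrow> 0 \<in> W \<and> (\<forall>x\<in>W. \<forall>y\<in>W. x + y \<in> W) \<and>
     (\<forall>c\<in>K. \<forall>x\<in>W. c * x \<in> W)"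

definition kspan :: "'a::field set \<Rightarrow> 'a set \<Rightarrow> 'a set" where
  "kspan K B = {x. \<exists>f. (\<forall>b\<in>B. f b \<in> K) \<and> x = (\<Sum>b\<in>B. f b * b)}"

definition kindep :: "'a::field set \<Rightarrow> 'a set \<Rightarrow> bool" where
  "kindep K B \<longleftrightarrow> finite B \<and> (\<forall>f. (\<forall>b\<in>B. f b \<in> K) \<longrightarrow>
       (\<Sum>b\<in>B. f b * b) = 0 \<longrightarrow> (\<forall>b\<in>B. f b = 0))"

definition kbasis :: "'a::field set \<Rightarrow> 'a set \<Rightarrow> 'a set \<Rightarrow> bool" where
  "kbasis K W B \<longleftrightarrow> B \<subseteq> W \<and> kindep K B \<and> kspan K B = W"

definition kdim :: "'a::field set \<Rightarrow> 'a set \<Rightarrow> nat" where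
  "kdim K W = card (SOME B. kbasis K W B)"

definition grass :: "'a::field set \<Rightarrow> 'a set \<Rightarrow> nat \<Rightarrow> 'a set set" where
  "grass K U k = {W. W \<subseteq> U \<and> ksubspace K W \<and> kdim K W = k}"

definition ssum :: "'a::field set \<Rightarrow> 'a set \<Rightarrow> 'a set" where
  "ssum U V = {u + v | u v. u \<in> U \<and> v \<in> V}"

definition sdist :: "'a::field set \<Rightarrow> 'a set \<Rightarrow> 'a set \<Rightarrow> nat" where
  "sdist K U V = kdim K (ssum U V) - kdim K (U \<inter> V)"

definition min_dist :: "'a::field set \<Rightarrow> 'a set set \<Rightarrow> nat" where
  "min_dist K C = Min {sdist K U V | U V. U \<in> C \<and> V \<in> C \<and> U \<noteq> V}"

definition orb :: "'a::field set \<Rightarrow> 'a set \<Rightarrow> 'a set set" where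
  "orb A V = {(\<lambda>x. b * x) ` V | b. b \<in> A - {0}}"

text \<open>Orb_A(V) is full-length iff its stabilizer in A* is exactly K*.\<close>
definition full_length_orb :: "'a::field set \<Rightarrow> 'a set \<Rightarrow> 'a set \<Rightarrow> bool" where
  "full_length_orb K A V \<longleftrightarrow> {b \<in> A - {0}. (\<lambda>x. b * x) ` V = V} = K - {0}"

end

theory Submission
  imports Defs "HOL-Library.FuncSet"
begin

text \<open>
  Let \<open>U = \<Phi>(\<alpha> V)\<close>, a \<open>k\<close>-dimensional subspace of \<open>V\<^sub>2 = \<Phi>(F_{q^m})\<close>. Multiplication
  by a nonzero scalar preserves dimension, so the whole orbit of \<open>U\<close> lies in \<open>G\<^sub>q(n, k)\<close>.
  If \<open>b U = U\<close>, then \<open>U \<subseteq> V\<^sub>2 \<inter> b V\<^sub>2\<close>, hence \<open>d(V\<^sub>2, b V\<^sub>2) \<le> 2(m - k) < d(C\<^sub>2)\<close>; as both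
  spaces lie in \<open>C\<^sub>2\<close> they coincide, and \<open>b \<in> F_q\<^sup>*\<close> because \<open>C\<^sub>2\<close> is full-length.
  Dimensions are computed through cardinalities: a \<open>d\<close>-dimensional subspace has \<open>q\<^sup>d\<close>
  elements, and \<open>|A + B| |A \<inter> B| = |A| |B|\<close>.
\<close>

abbreviation scale :: "'a::field \<Rightarrow> 'a set \<Rightarrow> 'a set" where
  "scale b V \<equiv> (\<lambda>x. b * x) ` V"

lemma is_subfieldD:
  assumes "is_subfield K"
  shows "0 \<in> K" "1 \<in> K" "x \<in> K \<Longrightarrow> y \<in> K \<Longrightarrow> x + y \<in> K"
    "x \<in> K \<Longrightarrow> y \<in> K \<Longrightarrow> x * y \<in> K" "x \<in> K \<Longrightarrow> - x \<in> K"
    "x \<in> K \<Longrightarrow> inverse x \<in> K"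
  using assms unfolding is_subfield_def by auto

lemma is_subfield_diff: "is_subfield K \<Longrightarrow> x \<in> K \<Longrightarrow> y \<in> K \<Longrightarrow> x - y \<in> K"
  unfolding is_subfield_def by (metis diff_conv_add_uminus)

lemma one_less_card_subfield:
  fixes K :: "'a::{field,finite} set"
  assumes "is_subfield K"
  shows "card K > 1"
proof -
  have "card {0::'a, 1} \<le> card K"
    using is_subfieldD(1,2)[OF assms] by (intro card_mono) auto
  then show ?thesis by simp
qed

lemma ksubspaceD:
  assumes "ksubspace K W"
  shows "0 \<in> W" "x \<in> W \<Longrightarrow> y \<in> W \<Longrightarrow> x + y \<in> W" "c \<in> K \<Longrightarrow> x \<in> W \<Longrightarrow> c * x \<in> W"
  using assms unfolding ksubspace_def by auto

lemma ksubspace_diff: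
  assumes "is_subfield K" "ksubspace K W" "x \<in> W" "y \<in> W"
  shows "x - y \<in> W"
proof -
  have "- 1 \<in> K" using is_subfieldD(2,5)[OF assms(1)] by blast
  then have "x + (- 1) * y \<in> W" using ksubspaceD[OF assms(2)] assms(3,4) by blast
  then show ?thesis by simp
qed

lemma subfield_ksubspace: "is_subfield M \<Longrightarrow> K \<subseteq> M \<Longrightarrow> ksubspace K M"
  unfolding ksubspace_def using is_subfieldD[of M] by auto

lemma ksubspace_Int: "ksubspace K A \<Longrightarrow> ksubspace K B \<Longrightarrow> ksubspace K (A \<inter> B)"
  unfolding ksubspace_def by auto

lemma ksubspace_ssum:
  assumes A: "ksubspace K A" and B: "ksubspace K B"
  shows "ksubspace K (ssum A B)"
  unfolding ksubspace_def
proof (intro conjI ballI)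
  show "0 \<in> ssum A B"
    unfolding ssum_def using ksubspaceD(1)[OF A] ksubspaceD(1)[OF B] by force
  fix x y assume "x \<in> ssum A B" "y \<in> ssum A B"
  then obtain u v u' v' where "u \<in> A" "v \<in> B" "u' \<in> A" "v' \<in> B" "x = u + v" "y = u' + v'"
    unfolding ssum_def by auto
  moreover have "u + v + (u' + v') = (u + u') + (v + v')" by (simp add: algebra_simps)
  ultimately show "x + y \<in> ssum A B"
    unfolding ssum_def using ksubspaceD(2)[OF A] ksubspaceD(2)[OF B] by blast
next
  fix c x assume "c \<in> K" "x \<in> ssum A B"
  then obtain u v where "u \<in> A" "v \<in> B" "x = u + v" unfolding ssum_def by auto
  moreover have "c * (u + v) = c * u + c * v" by (simp add: algebra_simps)
  ultimately show "c * x \<in> ssum A B"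
    unfolding ssum_def using ksubspaceD(3)[OF A] ksubspaceD(3)[OF B] \<open>c \<in> K\<close> by blast
qed

lemma ksubspace_image:
  assumes W: "ksubspace K W" and WD: "W \<subseteq> D"
    and add: "\<And>x y. x \<in> D \<Longrightarrow> y \<in> D \<Longrightarrow> T (x + y) = T x + T y"
    and hom: "\<And>c x. c \<in> K \<Longrightarrow> x \<in> D \<Longrightarrow> T (c * x) = c * T x"
  shows "ksubspace K (T ` W)"
  unfolding ksubspace_def
proof (intro conjI ballI)
  have "0 \<in> W" using ksubspaceD(1)[OF W] .
  moreover have "T (0 + 0) = T 0 + T 0" using add \<open>0 \<in> W\<close> WD by blast
  then have "T 0 = 0" by (simp only: add_0 add_cancel_right_right)
  ultimately show "0 \<in> T ` W" by (intro image_eqI[of _ T 0]) simp_all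
  fix x y assume "x \<in> T ` W" "y \<in> T ` W"
  then obtain u v where uv: "u \<in> W" "v \<in> W" "x = T u" "y = T v" by auto
  then have "x + y = T (u + v)" using add subsetD[OF WD] by simp
  then show "x + y \<in> T ` W" using ksubspaceD(2)[OF W uv(1,2)] by (rule image_eqI)
next
  fix c x assume c: "c \<in> K" and "x \<in> T ` W"
  then obtain u where u: "u \<in> W" "x = T u" by auto
  then have "c * x = T (c * u)" using hom[OF c] subsetD[OF WD] by simp
  then show "c * x \<in> T ` W" using ksubspaceD(3)[OF W c u(1)] by (rule image_eqI)
qed

lemma ksubspace_scale: "ksubspace K W \<Longrightarrow> ksubspace K (scale b W)"
  by (rule ksubspace_image[where D = UNIV]) (auto simp: algebra_simps)

lemma scale_subfield_eq:
  fixes W :: "'a::{field,finite} set"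
  assumes "ksubspace K W" and "c \<in> K" and "c \<noteq> 0"
  shows "scale c W = W"
proof (rule card_subset_eq)
  show "scale c W \<subseteq> W" using ksubspaceD(3)[OF assms(1,2)] by auto
  show "card (scale c W) = card W" using assms(3) by (intro card_image inj_onI) auto
qed simp

subsection \<open>Dimension and cardinality\<close>

lemma ksubspace_sum:
  assumes "ksubspace K W" "finite B" "B \<subseteq> W" "\<forall>b\<in>B. f b \<in> K"
  shows "(\<Sum>b\<in>B. f b * b) \<in> W"
  using assms(2-4) by (induction B rule: finite_induct) (auto intro: ksubspaceD[OF assms(1)])

lemma kspan_subset: "ksubspace K W \<Longrightarrow> finite B \<Longrightarrow> B \<subseteq> W \<Longrightarrow> kspan K B \<subseteq> W"
  unfolding kspan_def using ksubspace_sum by blast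

lemma in_kspan:
  assumes "is_subfield K" "finite B" "x \<in> B"
  shows "x \<in> kspan K B"
proof -
  have "(\<Sum>b\<in>B. (if b = x then 1 else 0) * b) = (\<Sum>b\<in>B. if b = x then b else 0)"
    by (rule sum.cong) auto
  also have "\<dots> = x" using assms(2,3) by simp
  finally show ?thesis
    unfolding kspan_def using is_subfieldD(1,2)[OF assms(1)]
    by (intro CollectI exI[of _ "\<lambda>b. if b = x then 1 else 0"]) auto
qed

lemma kindepD:
  assumes "kindep K B" "\<forall>b\<in>B. f b \<in> K" "(\<Sum>b\<in>B. f b * b) = 0" "b \<in> B"
  shows "f b = 0"
  using assms(1) unfolding kindep_def using assms(2-4) by blast

lemma kindep_insert:
  assumes K: "is_subfield K" and I: "kindep K B" and x: "x \<notin> kspan K B"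
  shows "kindep K (insert x B)"
  unfolding kindep_def
proof (intro conjI allI impI)
  have fin: "finite B" using I unfolding kindep_def by auto
  then show "finite (insert x B)" by simp
  have xB: "x \<notin> B" using in_kspan[OF K fin] x by blast
  fix f assume fK: "\<forall>b\<in>insert x B. f b \<in> K" and "(\<Sum>b\<in>insert x B. f b * b) = 0"
  then have "f x * x + (\<Sum>b\<in>B. f b * b) = 0" using fin xB by simp
  then have s: "(\<Sum>b\<in>B. f b * b) = - (f x * x)" by (simp only: neg_eq_iff_add_eq_0 eq_commute)
  have fx: "f x = 0"
  proof (rule ccontr)
    assume nz: "f x \<noteq> 0"
    have "(\<Sum>b\<in>B. (- f b * inverse (f x)) * b) = - inverse (f x) * (\<Sum>b\<in>B. f b * b)"
      by (simp add: sum_distrib_left algebra_simps)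
    also have "\<dots> = x" using s nz by simp
    finally have "x \<in> kspan K B"
      unfolding kspan_def using fK is_subfieldD[OF K]
      by (intro CollectI exI[of _ "\<lambda>b. - f b * inverse (f x)"]) auto
    then show False using x by blast
  qed
  then have "(\<Sum>b\<in>B. f b * b) = 0" using s by simp
  then have "\<forall>b\<in>B. f b = 0" using kindepD[OF I, of f] fK by blast
  then show "\<forall>b\<in>insert x B. f b = 0" using fx by auto
qed

text \<open>A maximal independent subset spans, and the ambient type bounds all cardinalities.\<close>
lemma kbasis_exists:
  fixes W :: "'a::{field,finite} set"
  assumes K: "is_subfield K" and W: "ksubspace K W"
  shows "\<exists>B. kbasis K W B"
proof -
  define S where "S = {B. B \<subseteq> W \<and> kindep K B}"
  have "{} \<in> S" unfolding S_def kindep_def by auto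
  moreover have fin: "finite (card ` S)" by simp
  ultimately have "Max (card ` S) \<in> card ` S" by (intro Max_in) auto
  then obtain B where B: "B \<in> S" "card B = Max (card ` S)" by (metis imageE)
  have "W \<subseteq> kspan K B"
  proof
    fix x assume xW: "x \<in> W"
    show "x \<in> kspan K B"
    proof (rule ccontr)
      assume nx: "x \<notin> kspan K B"
      have "insert x B \<in> S" using kindep_insert[OF K _ nx] B xW unfolding S_def by auto
      then have "card (insert x B) \<le> card B" using B Max_ge[OF fin] by simp
      moreover have "x \<notin> B" using nx in_kspan[OF K] by auto
      ultimately show False by simp
    qed
  qed
  moreover have "kspan K B \<subseteq> W" using B kspan_subset[OF W] unfolding S_def by auto
  ultimately show ?thesis using B unfolding kbasis_def S_def by auto
qed

text \<open>Coordinates with respect to a basis identify \<open>W\<close> with \<open>K\<^sup>B\<close>.\<close>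
lemma card_eq_power_card_kbasis:
  assumes K: "is_subfield K" and B: "kbasis K W B"
  shows "card W = card K ^ card B"
proof -
  have fin: "finite B" and I: "kindep K B" and sp: "kspan K B = W"
    using B unfolding kbasis_def kindep_def by auto
  define coords where "coords f = (\<Sum>b\<in>B. f b * b)" for f
  have "bij_betw coords (B \<rightarrow>\<^sub>E K) W"
  proof (rule bij_betw_imageI)
    show "inj_on coords (B \<rightarrow>\<^sub>E K)"
    proof
      fix f g assume f: "f \<in> B \<rightarrow>\<^sub>E K" and g: "g \<in> B \<rightarrow>\<^sub>E K" and "coords f = coords g"
      then have "(\<Sum>b\<in>B. (f b - g b) * b) = 0"
        unfolding coords_def by (simp add: algebra_simps sum_subtractf)
      moreover have "\<forall>b\<in>B. f b - g b \<in> K" using f g is_subfield_diff[OF K] by auto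
      ultimately have "\<forall>b\<in>B. f b - g b = 0" using kindepD[OF I, of "\<lambda>b. f b - g b"] by blast
      then show "f = g" using f g by (intro PiE_ext) auto
    qed
    show "coords ` (B \<rightarrow>\<^sub>E K) = W"
    proof
      show "coords ` (B \<rightarrow>\<^sub>E K) \<subseteq> W" unfolding coords_def sp[symmetric] kspan_def by auto
      show "W \<subseteq> coords ` (B \<rightarrow>\<^sub>E K)"
      proof
        fix x assume "x \<in> W"
        then obtain f where f: "\<forall>b\<in>B. f b \<in> K" "x = (\<Sum>b\<in>B. f b * b)"
          using sp unfolding kspan_def by auto
        then have "coords (restrict f B) = x" unfolding coords_def f(2) by (intro sum.cong) auto
        moreover have "restrict f B \<in> B \<rightarrow>\<^sub>E K" using f by auto
        ultimately show "x \<in> coords ` (B \<rightarrow>\<^sub>E K)" by blast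
      qed
    qed
  qed
  then have "card W = card (B \<rightarrow>\<^sub>E K)" by (simp add: bij_betw_same_card)
  also have "\<dots> = card K ^ card B" using fin by (simp add: card_PiE)
  finally show ?thesis .
qed

lemma card_eq_power_kdim:
  fixes W :: "'a::{field,finite} set"
  assumes "is_subfield K" "ksubspace K W"
  shows "card W = card K ^ kdim K W"
  using card_eq_power_card_kbasis[OF assms(1) someI_ex[OF kbasis_exists[OF assms]]]
  unfolding kdim_def .

lemma kdim_eq_iff_card:
  fixes W :: "'a::{field,finite} set"
  assumes "is_subfield K" "ksubspace K W"
  shows "kdim K W = d \<longleftrightarrow> card W = card K ^ d"
  using card_eq_power_kdim[OF assms] one_less_card_subfield[OF assms(1)] by simp

lemma kdim_mono:
  fixes A B :: "'a::{field,finite} set"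
  assumes "is_subfield K" "ksubspace K A" "ksubspace K B" "A \<subseteq> B"
  shows "kdim K A \<le> kdim K B"
proof (rule power_le_imp_le_exp[OF one_less_card_subfield[OF assms(1)]])
  show "card K ^ kdim K A \<le> card K ^ kdim K B"
    using card_mono[OF finite assms(4)]
    unfolding card_eq_power_kdim[OF assms(1,2)] card_eq_power_kdim[OF assms(1,3)] .
qed

lemma kdim_image:
  fixes W :: "'a::{field,finite} set"
  assumes K: "is_subfield K" and W: "ksubspace K W" "W \<subseteq> D"
    and add: "\<And>x y. x \<in> D \<Longrightarrow> y \<in> D \<Longrightarrow> T (x + y) = T x + T y"
    and hom: "\<And>c x. c \<in> K \<Longrightarrow> x \<in> D \<Longrightarrow> T (c * x) = c * T x"
    and inj: "inj_on T W"
  shows "kdim K (T ` W) = kdim K W"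
  using kdim_eq_iff_card[OF K ksubspace_image[OF W add hom]] card_eq_power_kdim[OF K W(1)]
    card_image[OF inj] by simp

lemma kdim_scale:
  fixes W :: "'a::{field,finite} set"
  assumes "is_subfield K" "ksubspace K W" "b \<noteq> 0"
  shows "kdim K (scale b W) = kdim K W"
  using assms by (intro kdim_image[where D = UNIV] inj_onI) (auto simp: algebra_simps)

text \<open>The decompositions of \<open>a + b\<close> are the pairs \<open>(a + t, b - t)\<close> with \<open>t \<in> A \<inter> B\<close>.\<close>
lemma card_decompositions:
  assumes K: "is_subfield K" and A: "ksubspace K A" "a \<in> A" and B: "ksubspace K B" "b \<in> B"
  shows "card {p \<in> A \<times> B. fst p + snd p = a + b} = card (A \<inter> B)"
proof -
  have "(\<lambda>t. (a + t, b - t)) ` (A \<inter> B) = {p \<in> A \<times> B. fst p + snd p = a + b}"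
  proof
    show "(\<lambda>t. (a + t, b - t)) ` (A \<inter> B) \<subseteq> {p \<in> A \<times> B. fst p + snd p = a + b}"
      using A B ksubspaceD(2)[OF A(1)] ksubspace_diff[OF K B(1)] by auto
    show "{p \<in> A \<times> B. fst p + snd p = a + b} \<subseteq> (\<lambda>t. (a + t, b - t)) ` (A \<inter> B)"
    proof
      fix p assume p: "p \<in> {p \<in> A \<times> B. fst p + snd p = a + b}"
      obtain a' b' where p_eq: "p = (a', b')" by (cases p)
      have a': "a' \<in> A" and b': "b' \<in> B" and "a' + b' = a + b" using p p_eq by auto
      then have t: "a' - a = b - b'" by (simp add: algebra_simps)
      then have "a' - a \<in> A \<inter> B"
        using ksubspace_diff[OF K A(1) a' A(2)] ksubspace_diff[OF K B(1) B(2) b'] by simp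
      moreover have "p = (a + (a' - a), b - (a' - a))" using p_eq t by (simp add: algebra_simps)
      ultimately show "p \<in> (\<lambda>t. (a + t, b - t)) ` (A \<inter> B)" by blast
    qed
  qed
  moreover have "inj_on (\<lambda>t. (a + t, b - t)) (A \<inter> B)" by (rule inj_onI) simp
  ultimately show ?thesis using card_image by metis
qed

lemma card_ssum_mult_card_Int:
  fixes A B :: "'a::{field,finite} set"
  assumes K: "is_subfield K" and A: "ksubspace K A" and B: "ksubspace K B"
  shows "card (ssum A B) * card (A \<inter> B) = card A * card B"
proof -
  define decomps where "decomps w = {p \<in> A \<times> B. fst p + snd p = w}" for w
  have partition: "A \<times> B = (\<Union>w\<in>ssum A B. decomps w)"
    unfolding decomps_def ssum_def by force
  have "card (A \<times> B) = (\<Sum>w\<in>ssum A B. card (decomps w))"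
    unfolding partition by (rule card_UN_disjoint) (auto simp: decomps_def)
  also have "\<dots> = (\<Sum>w\<in>ssum A B. card (A \<inter> B))"
    unfolding decomps_def ssum_def using card_decompositions[OF K A _ B] by (intro sum.cong) auto
  finally show ?thesis by (simp add: card_cartesian_product)
qed

lemma kdim_ssum_add_kdim_Int:
  fixes A B :: "'a::{field,finite} set"
  assumes K: "is_subfield K" and A: "ksubspace K A" and B: "ksubspace K B"
  shows "kdim K (ssum A B) + kdim K (A \<inter> B) = kdim K A + kdim K B"
proof -
  have "card K ^ (kdim K (ssum A B) + kdim K (A \<inter> B)) = card K ^ (kdim K A + kdim K B)"
    using card_ssum_mult_card_Int[OF K A B]
    unfolding power_add card_eq_power_kdim[OF K ksubspace_ssum[OF A B]]
      card_eq_power_kdim[OF K ksubspace_Int[OF A B]] card_eq_power_kdim[OF K A]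
      card_eq_power_kdim[OF K B] .
  then show ?thesis using one_less_card_subfield[OF K] by simp
qed

lemma sdist_eq:
  fixes A B :: "'a::{field,finite} set"
  assumes "is_subfield K" "ksubspace K A" "ksubspace K B"
  shows "sdist K A B = kdim K A + kdim K B - 2 * kdim K (A \<inter> B)"
  using kdim_ssum_add_kdim_Int[OF assms] unfolding sdist_def by simp

lemma min_dist_le_sdist:
  fixes C :: "'a::{field,finite} set set"
  assumes "U \<in> C" "V \<in> C" "U \<noteq> V"
  shows "min_dist K C \<le> sdist K U V"
proof -
  have "{sdist K U V | U V. U \<in> C \<and> V \<in> C \<and> U \<noteq> V} \<subseteq> range (case_prod (sdist K))"
    by auto
  then have "finite {sdist K U V | U V. U \<in> C \<and> V \<in> C \<and> U \<noteq> V}"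
    by (rule finite_subset) simp
  moreover have "sdist K U V \<in> {sdist K U V | U V. U \<in> C \<and> V \<in> C \<and> U \<noteq> V}"
    using assms by blast
  ultimately show ?thesis unfolding min_dist_def by (rule Min_le)
qed

subsection \<open>Stabilizers\<close>

lemma scale_fixes_superspace:
  fixes U V :: "'a::{field,finite} set"
  assumes K: "is_subfield K" and V: "ksubspace K V" and U: "ksubspace K U" "U \<subseteq> V"
    and b: "b \<noteq> 0" "scale b U = U"
    and C: "V \<in> C" "scale b V \<in> C"
    and dist: "min_dist K C > 2 * (kdim K V - kdim K U)"
  shows "scale b V = V"
proof (rule ccontr)
  assume ne: "scale b V \<noteq> V"
  have "U \<subseteq> V \<inter> scale b V" using U(2) b(2) by blast
  then have "kdim K U \<le> kdim K (V \<inter> scale b V)"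
    using K U V by (intro kdim_mono ksubspace_Int ksubspace_scale) auto
  then have "sdist K V (scale b V) \<le> 2 * (kdim K V - kdim K U)"
    using sdist_eq[OF K V ksubspace_scale[OF V]] kdim_scale[OF K V b(1)] by simp
  moreover have "min_dist K C \<le> sdist K V (scale b V)"
    using C ne by (intro min_dist_le_sdist) auto
  ultimately show False using dist by simp
qed

lemma full_length_orb_subspace:
  fixes U V :: "'a::{field,finite} set"
  assumes K: "is_subfield K" and V: "ksubspace K V" "full_length_orb K UNIV V"
    and U: "ksubspace K U" "U \<subseteq> V"
    and C: "orb UNIV V \<subseteq> C" and dist: "min_dist K C > 2 * (kdim K V - kdim K U)"
  shows "full_length_orb K UNIV U"
  unfolding full_length_orb_def
proof (intro equalityI subsetI)
  fix b assume "b \<in> {b \<in> UNIV - {0}. scale b U = U}"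
  then have b: "b \<noteq> 0" "scale b U = U" by auto
  have "V \<in> orb UNIV V" unfolding orb_def by (intro CollectI exI[of _ 1]) simp
  moreover have "scale b V \<in> orb UNIV V" unfolding orb_def using b(1) by blast
  ultimately have "scale b V = V" using scale_fixes_superspace[OF K V(1) U b] C dist by blast
  then show "b \<in> K - {0}" using V(2) b(1) unfolding full_length_orb_def by blast
next
  fix c assume "c \<in> K - {0}"
  then show "c \<in> {b \<in> UNIV - {0}. scale b U = U}" using scale_subfield_eq[OF U(1)] by auto
qed

lemma orb_subset_grass:
  fixes U :: "'a::{field,finite} set"
  assumes "is_subfield K" "ksubspace K U"
  shows "orb UNIV U \<subseteq> grass K UNIV (kdim K U)"
  using assms kdim_scale ksubspace_scale unfolding orb_def grass_def by blast

theorem proposition2p9: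
  fixes q r m k s1 s2 :: nat
    and K M :: "'a::{field,finite} set"
    and V1 :: "nat \<Rightarrow> 'a set"
    and Phi :: "nat \<Rightarrow> 'a \<Rightarrow> 'a"
  assumes q_pp: "\<exists>p e. prime p \<and> e \<ge> 1 \<and> q = p ^ e"
    and r_gt: "r > 1" and m_gt: "m > 1"
    and card_F: "card (UNIV :: 'a set) = q ^ (r * m)"
    and K_sub: "is_subfield K" and card_K: "card K = q"
    and M_sub: "is_subfield M" and card_M: "card M = q ^ m"
    and KM: "K \<subseteq> M"
    and k_bds: "1 < k" "k \<le> m"
    and s_pos: "s1 \<ge> 1" "s2 \<ge> 1"
    and V1_G: "\<And>h. h \<in> {1..s1} \<Longrightarrow> V1 h \<in> grass K M k"
    and Phi_add: "\<And>h x y. h \<in> {1..s2} \<Longrightarrow> x \<in> M \<Longrightarrow> y \<in> M \<Longrightarrow>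
                    Phi h (x + y) = Phi h x + Phi h y"
    and Phi_smult: "\<And>h c x. h \<in> {1..s2} \<Longrightarrow> c \<in> K \<Longrightarrow> x \<in> M \<Longrightarrow>
                    Phi h (c * x) = c * Phi h x"
    and Phi_inj: "\<And>h. h \<in> {1..s2} \<Longrightarrow> inj_on (Phi h) M"
    and C2_full: "\<And>h. h \<in> {1..s2} \<Longrightarrow> full_length_orb K UNIV (Phi h ` M)"
    and C2_dist: "min_dist K (\<Union>h\<in>{1..s2}. orb UNIV (Phi h ` M)) > 2 * (m - k)"
  shows "(\<Union>h2\<in>{1..s2}. \<Union>h1\<in>{1..s1}. \<Union>\<alpha>\<in>M - {0}.
            orb UNIV (Phi h2 ` ((\<lambda>x. \<alpha> * x) ` V1 h1))) \<subseteq> grass K UNIV k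
       \<and> (\<forall>h2\<in>{1..s2}. \<forall>h1\<in>{1..s1}. \<forall>\<alpha>\<in>M - {0}.
            full_length_orb K UNIV (Phi h2 ` ((\<lambda>x. \<alpha> * x) ` V1 h1)))"
proof -
  have M: "ksubspace K M" "kdim K M = m"
    using subfield_ksubspace[OF M_sub KM] kdim_eq_iff_card[OF K_sub] card_K card_M by auto
  have "orb UNIV (Phi h2 ` scale \<alpha> (V1 h1)) \<subseteq> grass K UNIV k
      \<and> full_length_orb K UNIV (Phi h2 ` scale \<alpha> (V1 h1))"
    if h2: "h2 \<in> {1..s2}" and h1: "h1 \<in> {1..s1}" and \<alpha>: "\<alpha> \<in> M - {0}" for h2 h1 \<alpha>
  proof -
    have V: "V1 h1 \<subseteq> M" "ksubspace K (V1 h1)" "kdim K (V1 h1) = k"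
      using V1_G[OF h1] unfolding grass_def by auto
    have \<alpha>V: "scale \<alpha> (V1 h1) \<subseteq> M" "ksubspace K (scale \<alpha> (V1 h1))" "kdim K (scale \<alpha> (V1 h1)) = k"
      using V \<alpha> is_subfieldD(4)[OF M_sub] ksubspace_scale kdim_scale[OF K_sub] by auto
    note linear = Phi_add[OF h2] Phi_smult[OF h2]
    have U: "ksubspace K (Phi h2 ` scale \<alpha> (V1 h1))" "kdim K (Phi h2 ` scale \<alpha> (V1 h1)) = k"
      using ksubspace_image[OF \<alpha>V(2,1) linear] kdim_image[OF K_sub \<alpha>V(2,1) linear]
        inj_on_subset[OF Phi_inj[OF h2] \<alpha>V(1)] \<alpha>V(3) by auto
    have V2: "ksubspace K (Phi h2 ` M)" "kdim K (Phi h2 ` M) = m"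
      using ksubspace_image[OF M(1) subset_refl linear] kdim_image[OF K_sub M(1) subset_refl linear]
        Phi_inj[OF h2] M(2) by auto
    have "Phi h2 ` scale \<alpha> (V1 h1) \<subseteq> Phi h2 ` M" using \<alpha>V(1) by (rule image_mono)
    moreover have "orb UNIV (Phi h2 ` M) \<subseteq> (\<Union>h\<in>{1..s2}. orb UNIV (Phi h ` M))" using h2 by blast
    moreover have "min_dist K (\<Union>h\<in>{1..s2}. orb UNIV (Phi h ` M))
        > 2 * (kdim K (Phi h2 ` M) - kdim K (Phi h2 ` scale \<alpha> (V1 h1)))"
      using C2_dist U(2) V2(2) by simp
    ultimately show ?thesis
      using orb_subset_grass[OF K_sub U(1)] full_length_orb_subspace[OF K_sub V2(1) C2_full[OF h2] U(1)]
        U(2) by simp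
  qed
  then show ?thesis by blast
qed

end
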